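(* In the SIS model under multi-layer Markovian mobility described in the context, with every generator matrix $Q^\alpha$ irreducible (every mobility digraph strongly connected), consider a solution with $\boldsymbol x(0)\gg\boldsymbol 0$ and $\boldsymbol p(0)\in[0,1]^{nm}$. If $p^\alpha_i(t)\to 0$ as $t\to\infty$ for some $i\in\{1,\dots,n\}$ and some $\alpha\in\{1,\dots,m\}$, then $\boldsymbol p(t)\to\boldsymbol 0$ as $t\to\infty$.
   Context: Setting: $n$ patches and $m$ classes. For each class $\alpha$, $Q^\alpha=(q^\alpha_{ij})$ is a continuous-time Markov chain generator on $\{1,\dots,n\}$ ($q^\alpha_{ij}\ge0$ for $i\ne j$ is the rate from $i$ to $j$, $q^\alpha_{ii}=-\sum_{j\ne i}q^\alpha_{ij}$). $x^\alpha_i>0$ is the number of class-$\alpha$ individuals at node $i$, $p^\alpha_i$ the infected fraction of class $\alpha$ at node $i$; $\boldsymbol x,\boldsymbol p\in\mathbb R^{nm}$ stack these class by class, and $P=\operatorname{diag}(\boldsymbol p)$. Node $i$ has infection rate $\beta_i>0$ and recovery rate $\delta_i\ge0$; $B$ and $D$ are $nm\times nm$ block-diagonal with $m$ identical blocks $\operatorname{diag}(\beta_1,\dots,\beta_n)$ and $\operatorname{diag}(\delta_1,\dots,\delta_n)$. $L(\boldsymbol x)$ is block-diagonal with blocks $L^\alpha(\boldsymbol x)$: $l^\alpha_{ii}=\sum_{j\ne i}q^\alpha_{ji}x^\alpha_j/x^\alpha_i$, $l^\alpha_{ij}=-q^\alpha_{ji}x^\alpha_j/x^\alpha_i$ ($i\ne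 j$). With $f^\alpha_i(\boldsymbol x)=x^\alpha_i/\sum_\gamma x^\gamma_i$, $F^\alpha=\operatorname{diag}(f^\alpha_1,\dots,f^\alpha_n)$, $\bar F=[F^1,\dots,F^m]$, $F(\boldsymbol x)$ is $m$ copies of $\bar F(\boldsymbol x)$ stacked vertically. Dynamics: $\dot{\boldsymbol p}=(BF(\boldsymbol x)-D-L(\boldsymbol x))\boldsymbol p-PBF(\boldsymbol x)\boldsymbol p$, $\dot{\boldsymbol x}^\alpha=(Q^\alpha)^\top\boldsymbol x^\alpha$. Componentwise, $\dot p^\alpha_i=-\delta_ip^\alpha_i+\beta_i\bar p_i(1-p^\alpha_i)-l^\alpha_{ii}p^\alpha_i-\sum_{j\ne i}l^\alpha_{ij}p^\alpha_j$ with $\bar p_i=\sum_\alpha f^\alpha_ip^\alpha_i$. *)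

theory Defs
  imports "HOL-Analysis.Analysis"
begin

text \<open>Nodes are indexed by a finite type 'n, classes by a finite type 'c.
  q a i j is the rate q^a_{ij} of the generator Q^a; x a i, p a i are x^a_i, p^a_i.\<close>

definition is_generator :: "('n::finite \<Rightarrow> 'n \<Rightarrow> real) \<Rightarrow> bool" where
  "is_generator Q \<longleftrightarrow> (\<forall>i j. i \<noteq> j \<longrightarrow> 0 \<le> Q i j) \<and>
     (\<forall>i. Q i i = - (\<Sum>j\<in>UNIV - {i}. Q i j))"

definition irreducible_generator :: "('n::finite \<Rightarrow> 'n \<Rightarrow> real) \<Rightarrow> bool" where
  "irreducible_generator Q \<longleftrightarrow> (\<forall>i j. (i, j) \<in> {(u, v). u \<noteq> v \<and> 0 < Q u v}\<^sup>*)"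

definition Lmat :: "('c \<Rightarrow> 'n::finite \<Rightarrow> 'n \<Rightarrow> real) \<Rightarrow> ('c \<Rightarrow> 'n \<Rightarrow> real) \<Rightarrow> 'c \<Rightarrow> 'n \<Rightarrow> 'n \<Rightarrow> real" where
  "Lmat q x a i j = (if i = j then (\<Sum>k\<in>UNIV - {i}. q a k i * x a k) / x a i
                     else - q a j i * x a j / x a i)"

definition frac :: "('c::finite \<Rightarrow> 'n \<Rightarrow> real) \<Rightarrow> 'c \<Rightarrow> 'n \<Rightarrow> real" where
  "frac x a i = x a i / (\<Sum>g\<in>UNIV. x g i)"

definition pbar :: "('c::finite \<Rightarrow> 'n \<Rightarrow> real) \<Rightarrow> ('c \<Rightarrow> 'n \<Rightarrow> real) \<Rightarrow> 'n \<Rightarrow> real" where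
  "pbar x p i = (\<Sum>a\<in>UNIV. frac x a i * p a i)"

definition p_rhs :: "('c::finite \<Rightarrow> 'n::finite \<Rightarrow> 'n \<Rightarrow> real) \<Rightarrow> ('n \<Rightarrow> real) \<Rightarrow> ('n \<Rightarrow> real)
     \<Rightarrow> ('c \<Rightarrow> 'n \<Rightarrow> real) \<Rightarrow> ('c \<Rightarrow> 'n \<Rightarrow> real) \<Rightarrow> 'c \<Rightarrow> 'n \<Rightarrow> real" where
  "p_rhs q \<beta> \<delta> x p a i =
     - \<delta> i * p a i + \<beta> i * pbar x p i * (1 - p a i) - Lmat q x a i i * p a i
     - (\<Sum>j\<in>UNIV - {i}. Lmat q x a i j * p a j)"

definition x_rhs :: "('c \<Rightarrow> 'n::finite \<Rightarrow> 'n \<Rightarrow> real) \<Rightarrow> ('c \<Rightarrow> 'n \<Rightarrow> real) \<Rightarrow> 'c \<Rightarrow> 'n \<Rightarrow> real" where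
  "x_rhs q x a i = (\<Sum>j\<in>UNIV. q a j i * x a j)"

end

theory Submission
  imports Defs
begin

(* The mobility equations are linear with an irreducible Metzler matrix and conserve the mass
   of every class, so each x^a_i stays between two positive constants. Consequently the
   coefficients of the p-equations are bounded, and the coupling coefficients
   q^a_ji x^a_j / x^a_i and the class fractions f^a_i are bounded below by positive constants.
   The p-equation of a component p^a_i has a nonnegative forcing part (infection pressure from
   all classes at node i, inflow of infected individuals from nodes j with q^a_ji > 0) and a
   loss part of size O(p^a_i). If p^a_i tends to 0, none of its forcing terms can stay large:
   such a term decays at most exponentially, so it would raise p^a_i by a fixed amount over a
   unit time interval. Hence p^g_i -> 0 for every class g, and, following the edges of the
   strongly connected mobility digraph backwards, p^a_j -> 0 at every node j. *)

section \<open>Real-analysis lemmas\<close>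

lemma continuous_on_if_has_real_derivative_nonneg:
  assumes "\<And>t. 0 \<le> t \<Longrightarrow> (f has_real_derivative f' t) (at t within {0..})"
  shows "continuous_on {0..} f"
  by (rule DERIV_continuous_on[where D = f']) (use assms in auto)

lemma has_real_derivative_at_if_pos:
  assumes "(f has_real_derivative f') (at t within {0..})" and "0 < t"
  shows "(f has_real_derivative f') (at t)"
proof -
  have "at t within {0..} = at t" by (rule at_within_interior) (use assms(2) in simp)
  thus ?thesis using assms(1) by simp
qed

lemma differential_inequality_lower_bound:
  fixes f f' :: "real \<Rightarrow> real"
  assumes "t \<le> s" and cont: "continuous_on {t..s} f"
    and deriv: "\<And>r. t < r \<Longrightarrow> r < s \<Longrightarrow> (f has_real_derivative f' r) (at r)"
    and ineq: "\<And>r. t < r \<Longrightarrow> r < s \<Longrightarrow> A - M * f r \<le> f' r"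
    and "0 \<le> A" "0 \<le> M"
  shows "exp (- M * (s - t)) * (f t + A * (s - t)) \<le> f s"
proof -
  define g where "g r = exp (M * r) * f r - A * exp (M * t) * r" for r
  have "g t \<le> g s"
  proof (rule DERIV_nonneg_imp_increasing_open[OF \<open>t \<le> s\<close>])
    fix r assume r: "t < r" "r < s"
    have "(g has_real_derivative exp (M * r) * (M * f r + f' r) - A * exp (M * t)) (at r)"
      unfolding g_def using deriv[OF r] by (auto intro!: derivative_eq_intros simp: algebra_simps)
    moreover have "A * exp (M * t) \<le> exp (M * r) * (M * f r + f' r)"
    proof -
      have "A * exp (M * t) \<le> A * exp (M * r)"
        using r \<open>0 \<le> A\<close> \<open>0 \<le> M\<close> by (intro mult_left_mono) (auto intro: mult_left_mono)
      also have "\<dots> \<le> exp (M * r) * (M * f r + f' r)"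
        using ineq[OF r] by (simp add: mult.commute)
      finally show ?thesis .
    qed
    ultimately show "\<exists>y. (g has_real_derivative y) (at r) \<and> 0 \<le> y" by fastforce
  next
    show "continuous_on {t..s} g" unfolding g_def using cont by (intro continuous_intros)
  qed
  hence growth: "exp (M * t) * (f t + A * (s - t)) \<le> exp (M * s) * f s"
    unfolding g_def by (simp add: algebra_simps)
  have "exp (- M * (s - t)) * (f t + A * (s - t)) = exp (- M * s) * (exp (M * t) * (f t + A * (s - t)))"
    by (simp add: algebra_simps flip: exp_add)
  also have "\<dots> \<le> exp (- M * s) * (exp (M * s) * f s)"
    using growth by (rule mult_left_mono) simp
  also have "\<dots> = f s"
    by (simp flip: exp_add mult.assoc)
  finally show ?thesis .
qed

lemma first_nonpositive_time:
  fixes v :: "real \<Rightarrow> 'k::finite \<Rightarrow> real"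
  assumes cont: "\<And>k. continuous_on {0..} (\<lambda>s. v s k)"
    and init: "\<And>k. 0 < v 0 k" and "0 \<le> t" and "v t k \<le> 0"
  obtains \<tau> j where "0 < \<tau>" "\<tau> \<le> t" "v \<tau> j = 0" "\<And>k. 0 \<le> v \<tau> k"
    "\<And>s k. 0 \<le> s \<Longrightarrow> s < \<tau> \<Longrightarrow> 0 < v s k"
proof -
  define S where "S = (\<Union>k. {0..t} \<inter> (\<lambda>s. v s k) -` {..0})"
  have "closed ({0..t} \<inter> (\<lambda>s. v s k) -` {..0})" for k
    by (rule continuous_closed_preimage) (auto intro: continuous_on_subset[OF cont])
  hence "closed S" unfolding S_def by (intro closed_UN) auto
  moreover have "t \<in> S" "bdd_below S"
    unfolding S_def using assms by (auto intro: bdd_belowI[of _ 0])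
  ultimately have "Inf S \<in> S" using closed_contains_Inf by blast
  then obtain j where j: "0 \<le> Inf S" "Inf S \<le> t" "v (Inf S) j \<le> 0" unfolding S_def by auto
  have before: "0 < v s k" if "0 \<le> s" "s < Inf S" for s k
  proof (rule ccontr)
    assume "\<not> 0 < v s k"
    hence "s \<in> S" unfolding S_def using that j by (auto simp: not_less)
    hence "Inf S \<le> s" using \<open>bdd_below S\<close> by (rule cInf_lower)
    thus False using that by simp
  qed
  have pos: "0 < Inf S"
  proof (rule ccontr)
    assume "\<not> 0 < Inf S"
    hence "Inf S = 0" using j by simp
    thus False using j(3) init[of j] by simp
  qed
  have limit: "0 \<le> v (Inf S) k" for k
  proof (rule continuous_ge_on_closure[where S = "{0..<Inf S}" and f = "\<lambda>s. v s k"])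
    show "continuous_on (closure {0..<Inf S}) (\<lambda>s. v s k)"
      using pos by (auto intro: continuous_on_subset[OF cont])
    show "Inf S \<in> closure {0..<Inf S}" using pos by simp
    show "0 \<le> v s k" if "s \<in> {0..<Inf S}" for s
      using before[of s k] that by simp
  qed
  have "v (Inf S) j = 0" using j(3) limit[of j] by simp
  from that[OF pos j(2) this limit before] show ?thesis .
qed

lemma nonneg_invariant:
  fixes u u' :: "real \<Rightarrow> 'k::finite \<Rightarrow> real"
  assumes deriv: "\<And>t k. 0 \<le> t \<Longrightarrow> ((\<lambda>s. u s k) has_real_derivative u' t k) (at t within {0..})"
    and init: "\<And>k. 0 \<le> u 0 k" and "0 \<le> K"
    and inward: "\<And>t k. 0 < t \<Longrightarrow> -1 \<le> u t k \<Longrightarrow> u t k \<le> 0 \<Longrightarrow> (\<And>j. u t k \<le> u t j)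
      \<Longrightarrow> K * u t k \<le> u' t k"
    and "0 \<le> t"
  shows "0 \<le> u t k"
proof (rule ccontr)
  assume "\<not> 0 \<le> u t k"
  define C where "C = K + 1"
  define \<epsilon> where "\<epsilon> = min (- u t k) 1 / exp (C * t)"
  have "0 < \<epsilon>" unfolding \<epsilon>_def using \<open>\<not> 0 \<le> u t k\<close> by simp
  \<comment> \<open>Since C > K, at the first time some component of v reaches 0 its derivative is
      positive, although that component was positive just before.\<close>
  define v where "v s j = u s j + \<epsilon> * exp (C * s)" for s j
  have v_deriv: "((\<lambda>s. v s j) has_real_derivative u' s j + \<epsilon> * C * exp (C * s)) (at s within {0..})"
    if "0 \<le> s" for s j
    unfolding v_def using deriv[OF that] by (auto intro!: derivative_eq_intros)
  have "continuous_on {0..} (\<lambda>s. v s j)" for j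
    by (rule continuous_on_if_has_real_derivative_nonneg[OF v_deriv])
  moreover have "0 < v 0 j" for j unfolding v_def using init[of j] \<open>0 < \<epsilon>\<close> by simp
  moreover have "v t k \<le> 0" unfolding v_def \<epsilon>_def by simp
  ultimately obtain \<tau> j where \<tau>: "0 < \<tau>" "\<tau> \<le> t" "v \<tau> j = 0" "\<And>k. 0 \<le> v \<tau> k"
    "\<And>s k. 0 \<le> s \<Longrightarrow> s < \<tau> \<Longrightarrow> 0 < v s k"
    using first_nonpositive_time[of v t k] \<open>0 \<le> t\<close> by blast
  have "\<epsilon> * exp (C * \<tau>) \<le> \<epsilon> * exp (C * t)"
    using \<tau>(2) \<open>0 < \<epsilon>\<close> \<open>0 \<le> K\<close> unfolding C_def by (simp add: mult_left_mono)
  also have "\<dots> \<le> 1" unfolding \<epsilon>_def by simp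
  finally have "\<epsilon> * exp (C * \<tau>) \<le> 1" .
  moreover have u_\<tau>: "u \<tau> j = - (\<epsilon> * exp (C * \<tau>))" using \<tau>(3) unfolding v_def by simp
  ultimately have "-1 \<le> u \<tau> j" "u \<tau> j \<le> 0" using \<open>0 < \<epsilon>\<close> by auto
  moreover have "u \<tau> j \<le> u \<tau> i" for i
    using \<tau>(3) \<tau>(4)[of i] unfolding v_def by simp
  ultimately have "K * u \<tau> j \<le> u' \<tau> j" by (rule inward[OF \<tau>(1)])
  moreover have "0 < \<epsilon> * exp (C * \<tau>)" using \<open>0 < \<epsilon>\<close> by simp
  ultimately have "0 < u' \<tau> j + \<epsilon> * C * exp (C * \<tau>)"
    unfolding u_\<tau> C_def by (simp add: algebra_simps)
  then obtain d where "0 < d"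
    and left: "\<And>h. 0 < h \<Longrightarrow> \<tau> - h \<in> {0..} \<Longrightarrow> h < d \<Longrightarrow> v (\<tau> - h) j < v \<tau> j"
    using has_real_derivative_pos_inc_left[OF v_deriv] \<tau>(1) by (metis less_imp_le)
  define h where "h = min (d / 2) \<tau>"
  have "v (\<tau> - h) j < 0" using left[of h] \<tau>(1,3) \<open>0 < d\<close> unfolding h_def by auto
  moreover have "0 < v (\<tau> - h) j" using \<tau>(1,5) \<open>0 < d\<close> unfolding h_def by auto
  ultimately show False by simp
qed

lemma forcing_term_tendsto_zero:
  fixes y y' w :: "real \<Rightarrow> real"
  assumes deriv: "\<And>t. T \<le> t \<Longrightarrow> (y has_real_derivative y' t) (at t)"
    and y_lim: "(y \<longlongrightarrow> 0) at_top"
    and w_nonneg: "\<And>t. T \<le> t \<Longrightarrow> 0 \<le> w t"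
    and forcing: "\<And>t. T \<le> t \<Longrightarrow> c * w t - K * \<bar>y t\<bar> \<le> y' t"
    and slow_decay: "\<And>t s. T \<le> t \<Longrightarrow> t \<le> s \<Longrightarrow> s \<le> t + 1 \<Longrightarrow> d * w t \<le> w s"
    and "0 < c" "0 < d" "0 \<le> K"
  shows "(w \<longlongrightarrow> 0) at_top"
proof (rule order_tendstoI)
  fix a :: real assume "a < 0"
  with w_nonneg show "eventually (\<lambda>t. a < w t) at_top"
    unfolding eventually_at_top_linorder by (metis less_le_trans)
next
  fix \<eta> :: real assume "0 < \<eta>"
  define \<epsilon> where "\<epsilon> = c * d * \<eta> / (K + 2)"
  have "0 < \<epsilon>" unfolding \<epsilon>_def using \<open>0 < c\<close> \<open>0 < d\<close> \<open>0 < \<eta>\<close> \<open>0 \<le> K\<close> by simp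
  with y_lim have "eventually (\<lambda>t. \<bar>y t\<bar> < \<epsilon>) at_top"
    by (auto simp: tendsto_iff dist_real_def)
  then obtain T1 where T1: "\<And>t. T1 \<le> t \<Longrightarrow> \<bar>y t\<bar> < \<epsilon>"
    by (auto simp: eventually_at_top_linorder)
  show "eventually (\<lambda>t. w t < \<eta>) at_top"
    unfolding eventually_at_top_linorder
  proof (intro exI allI impI)
    fix t assume t: "max T T1 \<le> t"
    show "w t < \<eta>"
    proof (rule ccontr)
      assume "\<not> w t < \<eta>"
      \<comment> \<open>Over [t, t + 1] the forcing would raise y by about c d \<eta>, more than its oscillation 2 \<epsilon>.\<close>
      obtain \<xi> where \<xi>: "t < \<xi>" "\<xi> < t + 1" "y (t + 1) - y t = y' \<xi>"
        using MVT2[of t "t + 1" y y'] deriv t by force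
      have "d * \<eta> \<le> w \<xi>"
        using slow_decay[of t \<xi>] \<open>\<not> w t < \<eta>\<close> \<open>0 < d\<close> t \<xi> by (smt (verit) mult_left_mono)
      hence "c * d * \<eta> \<le> c * w \<xi>" using \<open>0 < c\<close> by (simp add: mult.assoc)
      moreover have "K * \<bar>y \<xi>\<bar> \<le> K * \<epsilon>"
        using T1[of \<xi>] t \<xi> \<open>0 \<le> K\<close> by (simp add: mult_left_mono)
      moreover have "c * w \<xi> - K * \<bar>y \<xi>\<bar> \<le> y' \<xi>" using forcing[of \<xi>] t \<xi> by simp
      moreover have "\<bar>y t\<bar> < \<epsilon>" "\<bar>y (t + 1)\<bar> < \<epsilon>" using T1 t by auto
      ultimately have "c * d * \<eta> < (K + 2) * \<epsilon>" using \<xi>(3) by (simp add: algebra_simps)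
      thus False unfolding \<epsilon>_def using \<open>0 \<le> K\<close> by simp
    qed
  qed
qed

lemma finite_uniform_lower_bound:
  fixes f g :: "'k::finite \<Rightarrow> 'a \<Rightarrow> real"
  assumes "\<And>k. \<exists>c>0. \<forall>s\<in>S. c * f k s \<le> g k s" and "\<And>k s. s \<in> S \<Longrightarrow> 0 \<le> f k s"
  shows "\<exists>c>0. \<forall>k. \<forall>s\<in>S. c * f k s \<le> g k s"
proof -
  obtain c where c: "\<And>k. 0 < c k" "\<And>k s. s \<in> S \<Longrightarrow> c k * f k s \<le> g k s"
    using assms(1) by metis
  have "0 < Min (range c)" using c(1) by (subst Min_gr_iff) auto
  moreover have "Min (range c) * f k s \<le> g k s" if "s \<in> S" for k s
  proof -
    have "Min (range c) * f k s \<le> c k * f k s" using assms(2)[OF that] by (intro mult_right_mono) auto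
    also have "\<dots> \<le> g k s" using c(2)[OF that] .
    finally show ?thesis .
  qed
  ultimately show ?thesis by blast
qed

lemma Lmat_diag_eq: "Lmat q X a i i = - (\<Sum>j\<in>UNIV - {i}. Lmat q X a i j)"
  unfolding Lmat_def by (simp add: sum_divide_distrib sum_negf)

lemma p_rhs_eq:
  "p_rhs q \<beta> \<delta> X P a i = - \<delta> i * P a i + \<beta> i * pbar X P i * (1 - P a i)
     - (\<Sum>j\<in>UNIV - {i}. Lmat q X a i j * (P a j - P a i))"
  unfolding p_rhs_def Lmat_diag_eq[of q X a i]
  by (simp add: right_diff_distrib sum_subtractf sum_distrib_right)

lemma frac_nonneg: "(\<And>g. 0 \<le> X g i) \<Longrightarrow> 0 \<le> frac X a i"
  unfolding frac_def by (simp add: sum_nonneg)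

lemma frac_sum_eq_1:
  assumes "\<And>g. 0 < X g i"
  shows "(\<Sum>g\<in>UNIV. frac X g i) = 1"
proof -
  have "0 < (\<Sum>g\<in>UNIV. X g i)" using assms by (intro sum_pos) auto
  thus ?thesis unfolding frac_def by (simp add: sum_divide_distrib[symmetric])
qed

lemma pbar_ge_lower_bound:
  assumes "\<And>g. 0 < X g i" and "\<And>g. m \<le> P g i"
  shows "m \<le> pbar X P i"
proof -
  have "m = (\<Sum>g\<in>UNIV. frac X g i * m)"
    by (simp add: sum_distrib_right[symmetric] frac_sum_eq_1 assms(1))
  also have "\<dots> \<le> pbar X P i"
    unfolding pbar_def using assms by (intro sum_mono mult_left_mono frac_nonneg) (auto intro: less_imp_le)
  finally show ?thesis .
qed

lemma frac_mult_le_pbar: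
  assumes "\<And>g. 0 \<le> X g i" and "\<And>g. 0 \<le> P g i"
  shows "frac X g i * P g i \<le> pbar X P i"
  unfolding pbar_def using assms by (intro member_le_sum mult_nonneg_nonneg frac_nonneg) auto

locale sis_model =
  fixes q :: "'c::finite \<Rightarrow> 'n::finite \<Rightarrow> 'n \<Rightarrow> real"
    and \<beta> \<delta> :: "'n \<Rightarrow> real"
    and x p :: "real \<Rightarrow> 'c \<Rightarrow> 'n \<Rightarrow> real"
  assumes gen: "\<And>a. is_generator (q a)"
    and irr: "\<And>a. irreducible_generator (q a)"
    and beta_pos: "\<And>i. 0 < \<beta> i"
    and delta_nonneg: "\<And>i. 0 \<le> \<delta> i"
    and x_deriv: "\<And>t a i. 0 \<le> t \<Longrightarrow>
        ((\<lambda>s. x s a i) has_real_derivative x_rhs q (x t) a i) (at t within {0..})"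
    and p_deriv: "\<And>t a i. 0 \<le> t \<Longrightarrow>
        ((\<lambda>s. p s a i) has_real_derivative p_rhs q \<beta> \<delta> (x t) (p t) a i) (at t within {0..})"
    and x0: "\<And>a i. 0 < x 0 a i"
    and p0: "\<And>a i. 0 \<le> p 0 a i \<and> p 0 a i \<le> 1"
begin

section \<open>Mobility dynamics\<close>

lemma q_nonneg: "i \<noteq> j \<Longrightarrow> 0 \<le> q a i j"
  using gen[of a] unfolding is_generator_def by auto

lemma q_diag: "q a i i = - (\<Sum>j\<in>UNIV - {i}. q a i j)"
  using gen[of a] unfolding is_generator_def by auto

lemma q_diag_nonpos: "q a i i \<le> 0"
proof -
  have "0 \<le> (\<Sum>j\<in>UNIV - {i}. q a i j)" by (rule sum_nonneg) (auto intro: q_nonneg)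
  thus ?thesis using q_diag[of a i] by simp
qed

lemma q_row_sum: "(\<Sum>j\<in>UNIV. q a i j) = 0"
  by (simp add: sum.remove[of UNIV i] q_diag[of a i])

lemma x_rhs_eq: "x_rhs q X a i = q a i i * X a i + (\<Sum>j\<in>UNIV - {i}. q a j i * X a j)"
  unfolding x_rhs_def by (simp add: sum.remove)

lemma x_continuous: "continuous_on {0..} (\<lambda>s. x s a i)"
  by (rule continuous_on_if_has_real_derivative_nonneg[OF x_deriv])

lemma x_deriv_at: "0 < t \<Longrightarrow> ((\<lambda>s. x s a i) has_real_derivative x_rhs q (x t) a i) (at t)"
  by (rule has_real_derivative_at_if_pos[OF x_deriv]) simp_all

lemma x_nonneg:
  assumes "0 \<le> t"
  shows "0 \<le> x t a i"
proof (rule nonneg_invariant[where u = "\<lambda>t. x t a" and u' = "\<lambda>t. x_rhs q (x t) a"])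
  define K where "K = (\<Sum>j\<in>UNIV. \<Sum>l\<in>UNIV. \<bar>q a j l\<bar>)"
  show "0 \<le> K" unfolding K_def by (simp add: sum_nonneg)
  fix t l assume "0 < t" "x t a l \<le> 0" and min: "\<And>j. x t a l \<le> x t a j"
  have "q a j l \<le> (\<Sum>l'\<in>UNIV. \<bar>q a j l'\<bar>)" for j
    using member_le_sum[of l UNIV "\<lambda>l'. \<bar>q a j l'\<bar>"] by simp
  hence "(\<Sum>j\<in>UNIV. q a j l) \<le> K" unfolding K_def by (rule sum_mono)
  hence "K * x t a l \<le> (\<Sum>j\<in>UNIV. q a j l) * x t a l"
    using \<open>x t a l \<le> 0\<close> by (rule mult_right_mono_neg)
  also have "\<dots> \<le> x_rhs q (x t) a l"
    unfolding x_rhs_def sum_distrib_right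
    by (intro sum_mono, case_tac "j = l") (auto intro: mult_left_mono min q_nonneg)
  finally show "K * x t a l \<le> x_rhs q (x t) a l" .
qed (use assms x_deriv x0[THEN less_imp_le] in auto)

lemma x_decay:
  assumes "0 \<le> t" "t \<le> s"
  shows "exp (q a i i * (s - t)) * x t a i \<le> x s a i"
proof -
  have "exp (- (- q a i i) * (s - t)) * (x t a i + 0 * (s - t)) \<le> x s a i"
  proof (rule differential_inequality_lower_bound[where f' = "\<lambda>r. x_rhs q (x r) a i"])
    show "continuous_on {t..s} (\<lambda>r. x r a i)"
      using assms by (auto intro: continuous_on_subset[OF x_continuous])
    fix r assume "t < r" "r < s"
    with assms show "((\<lambda>r. x r a i) has_real_derivative x_rhs q (x r) a i) (at r)"
      by (intro x_deriv_at) simp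
    have "0 \<le> (\<Sum>j\<in>UNIV - {i}. q a j i * x r a j)"
      using \<open>t < r\<close> assms by (auto intro!: sum_nonneg mult_nonneg_nonneg q_nonneg x_nonneg)
    thus "0 - - q a i i * x r a i \<le> x_rhs q (x r) a i" unfolding x_rhs_eq by simp
  qed (use assms q_diag_nonpos in auto)
  thus ?thesis by simp
qed

lemma x_pos: "0 \<le> t \<Longrightarrow> 0 < x t a i"
  using x_decay[of 0 t a i] x0[of a i] by (smt (verit) exp_gt_zero mult_pos_pos)

lemma x_edge:
  assumes "j \<noteq> i" "0 \<le> t"
  shows "exp (q a i i) * (q a j i * exp (q a j j) * x t a j) \<le> x (t + 1) a i"
proof -
  define A where "A = q a j i * exp (q a j j) * x t a j"
  have "0 \<le> A" unfolding A_def using assms by (simp add: q_nonneg x_nonneg)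
  have "exp (- (- q a i i) * (t + 1 - t)) * (x t a i + A * (t + 1 - t)) \<le> x (t + 1) a i"
  proof (rule differential_inequality_lower_bound[where f' = "\<lambda>r. x_rhs q (x r) a i"])
    show "continuous_on {t..t + 1} (\<lambda>r. x r a i)"
      using assms by (auto intro: continuous_on_subset[OF x_continuous])
    fix r assume r: "t < r" "r < t + 1"
    with assms show "((\<lambda>r. x r a i) has_real_derivative x_rhs q (x r) a i) (at r)"
      by (intro x_deriv_at) simp
    have "q a j j \<le> q a j j * (r - t)"
      using r q_diag_nonpos[of a j] by (simp add: mult_le_cancel_left1)
    hence "exp (q a j j) * x t a j \<le> exp (q a j j * (r - t)) * x t a j"
      using assms x_nonneg by (intro mult_right_mono) auto
    also have "\<dots> \<le> x r a j" using assms r by (intro x_decay) auto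
    finally have "A \<le> q a j i * x r a j"
      unfolding A_def using q_nonneg[OF assms(1)] by (simp add: mult.assoc mult_left_mono)
    also have "\<dots> \<le> (\<Sum>k\<in>UNIV - {i}. q a k i * x r a k)"
      by (rule member_le_sum) (use assms r in \<open>auto intro!: mult_nonneg_nonneg q_nonneg x_nonneg\<close>)
    finally show "A - - q a i i * x r a i \<le> x_rhs q (x r) a i" unfolding x_rhs_eq by simp
  qed (use \<open>0 \<le> A\<close> q_diag_nonpos in auto)
  hence "exp (q a i i) * (x t a i + A) \<le> x (t + 1) a i" by simp
  moreover have "exp (q a i i) * A \<le> exp (q a i i) * (x t a i + A)"
    using x_nonneg[OF assms(2)] by simp
  ultimately show ?thesis unfolding A_def by linarith
qed

definition reaches :: "'c \<Rightarrow> 'n \<Rightarrow> 'n \<Rightarrow> nat \<Rightarrow> bool" where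
  "reaches a j i m \<longleftrightarrow> (\<exists>c>0. \<forall>t\<ge>0. c * x t a j \<le> x (t + real m) a i)"

lemma reaches_refl: "reaches a i i 0"
  unfolding reaches_def by (intro exI[of _ 1]) simp

lemma reaches_mono:
  assumes "reaches a j i m" "m \<le> m'"
  shows "reaches a j i m'"
proof -
  obtain c where "0 < c" and c: "\<And>t. 0 \<le> t \<Longrightarrow> c * x t a j \<le> x (t + real m) a i"
    using assms(1) unfolding reaches_def by blast
  have "exp (q a i i * (m' - m)) * c * x t a j \<le> x (t + real m') a i" if "0 \<le> t" for t
  proof -
    have "exp (q a i i * (m' - m)) * c * x t a j \<le> exp (q a i i * (m' - m)) * x (t + real m) a i"
      using c[OF that] by (simp add: mult.assoc)
    also have "\<dots> \<le> x (t + real m') a i"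
      using x_decay[of "t + real m" "t + real m'" a i] that assms(2) by simp
    finally show ?thesis .
  qed
  thus ?thesis unfolding reaches_def using \<open>0 < c\<close> by (intro exI[of _ "exp (q a i i * (m' - m)) * c"]) auto
qed

lemma reaches_trans:
  assumes "reaches a j k m" "reaches a k i m'"
  shows "reaches a j i (m + m')"
proof -
  obtain c c' where "0 < c" "0 < c'"
    and c: "\<And>t. 0 \<le> t \<Longrightarrow> c * x t a j \<le> x (t + real m) a k"
    and c': "\<And>t. 0 \<le> t \<Longrightarrow> c' * x t a k \<le> x (t + real m') a i"
    using assms unfolding reaches_def by blast
  have "c' * c * x t a j \<le> x (t + real (m + m')) a i" if "0 \<le> t" for t
  proof -
    have "c' * c * x t a j \<le> c' * x (t + real m) a k"
      using c[OF that] \<open>0 < c'\<close> by (simp add: mult.assoc)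
    also have "\<dots> \<le> x (t + real (m + m')) a i"
      using c'[of "t + real m"] that by (simp add: add.assoc)
    finally show ?thesis .
  qed
  thus ?thesis unfolding reaches_def using \<open>0 < c\<close> \<open>0 < c'\<close> by (intro exI[of _ "c' * c"]) auto
qed

lemma reaches_edge:
  assumes "j \<noteq> i" "0 < q a j i"
  shows "reaches a j i 1"
  unfolding reaches_def using assms x_edge[OF assms(1)]
  by (intro exI[of _ "exp (q a i i) * (q a j i * exp (q a j j))"]) (simp add: mult.assoc)

lemma reaches_uniform: "\<exists>M. \<forall>a j i. reaches a j i M"
proof -
  have "\<exists>m. reaches a j i m" for a j i
  proof -
    have "(j, i) \<in> {(u, v). u \<noteq> v \<and> 0 < q a u v}\<^sup>*"
      using irr[of a] unfolding irreducible_generator_def by blast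
    thus ?thesis
    proof (induction rule: rtrancl_induct)
      case base
      show ?case using reaches_refl by blast
    next
      case (step k i)
      then show ?case using reaches_trans reaches_edge by blast
    qed
  qed
  hence ev: "eventually (\<lambda>m. reaches a j i m) sequentially" for a j i
    unfolding eventually_sequentially using reaches_mono by blast
  have "eventually (\<lambda>m. \<forall>k :: 'c \<times> 'n \<times> 'n. case k of (a, j, i) \<Rightarrow> reaches a j i m) sequentially"
  proof (rule eventually_all_finite)
    fix k :: "'c \<times> 'n \<times> 'n"
    show "eventually (\<lambda>m. case k of (a, j, i) \<Rightarrow> reaches a j i m) sequentially"
      using ev by (cases k) simp
  qed
  thus ?thesis unfolding eventually_sequentially by blast
qed

lemma mass_conserved:
  assumes "0 \<le> t"
  shows "(\<Sum>i\<in>UNIV. x t a i) = (\<Sum>i\<in>UNIV. x 0 a i)"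
proof -
  have "((\<lambda>s. \<Sum>i\<in>UNIV. x s a i) has_real_derivative 0) (at s within {0..})" if "s \<in> {0..}" for s
  proof -
    have "((\<lambda>s. \<Sum>i\<in>UNIV. x s a i) has_real_derivative (\<Sum>i\<in>UNIV. x_rhs q (x s) a i)) (at s within {0..})"
      using that by (intro DERIV_sum x_deriv) auto
    moreover have "(\<Sum>i\<in>UNIV. x_rhs q (x s) a i) = (\<Sum>j\<in>UNIV. (\<Sum>i\<in>UNIV. q a j i) * x s a j)"
      unfolding x_rhs_def by (subst sum.swap) (simp add: sum_distrib_right)
    ultimately show ?thesis by (simp add: q_row_sum)
  qed
  then obtain c where "\<forall>s\<in>{0..}. (\<Sum>i\<in>UNIV. x s a i) = c"
    using has_field_derivative_zero_constant[OF convex_real_interval(1)] by blast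
  thus ?thesis using assms by force
qed

lemma x_le_mass:
  assumes "0 \<le> t"
  shows "x t a i \<le> (\<Sum>j\<in>UNIV. x 0 a j)"
proof -
  have "x t a i \<le> (\<Sum>j\<in>UNIV. x t a j)" by (rule member_le_sum) (use assms x_nonneg in auto)
  also have "\<dots> = (\<Sum>j\<in>UNIV. x 0 a j)" by (rule mass_conserved[OF assms])
  finally show ?thesis .
qed

lemma x_bounded_below_component: "\<exists>b>0. \<forall>t\<ge>0. b \<le> x t a i"
proof -
  obtain M where M: "\<And>j. reaches a j i M" using reaches_uniform by blast
  have "\<exists>c>0. \<forall>j. \<forall>t\<in>{0..}. c * x t a j \<le> x (t + real M) a i"
    by (rule finite_uniform_lower_bound) (use M x_nonneg in \<open>force simp: reaches_def\<close>)+
  then obtain c where "0 < c" and c: "\<And>j t. 0 \<le> t \<Longrightarrow> c * x t a j \<le> x (t + real M) a i"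
    by auto
  define b where "b = min (c * (\<Sum>j\<in>UNIV. x 0 a j) / CARD('n)) (exp (q a i i * M) * x 0 a i)"
  have "0 < b" unfolding b_def using \<open>0 < c\<close> x0 by (simp add: sum_pos)
  moreover have "b \<le> x t a i" if "0 \<le> t" for t
  proof (cases "M \<le> t")
    case True
    have "c * (\<Sum>j\<in>UNIV. x 0 a j) = (\<Sum>j\<in>UNIV. c * x (t - M) a j)"
      using mass_conserved[of "t - M" a] True by (simp add: sum_distrib_left[symmetric])
    also have "\<dots> \<le> (\<Sum>j::'n\<in>UNIV. x t a i)"
      using c[of "t - M"] True by (intro sum_mono) auto
    also have "\<dots> = CARD('n) * x t a i" by simp
    finally have "c * (\<Sum>j\<in>UNIV. x 0 a j) / CARD('n) \<le> x t a i"
      by (simp add: pos_divide_le_eq mult.commute)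
    thus ?thesis unfolding b_def by linarith
  next
    case False
    have "exp (q a i i * M) \<le> exp (q a i i * t)"
      using False q_diag_nonpos[of a i] by (simp add: mult_left_mono_neg)
    hence "exp (q a i i * M) * x 0 a i \<le> exp (q a i i * (t - 0)) * x 0 a i"
      using x0[of a i] by simp
    also have "\<dots> \<le> x t a i" using x_decay that by blast
    finally show ?thesis unfolding b_def by simp
  qed
  ultimately show ?thesis by blast
qed

lemma x_bounded_below: "\<exists>b>0. \<forall>t\<ge>0. \<forall>a i. b \<le> x t a i"
proof -
  have "\<exists>b>0. \<forall>k::'c \<times> 'n. \<forall>t\<in>{0..}. b * 1 \<le> x t (fst k) (snd k)"
    by (rule finite_uniform_lower_bound) (use x_bounded_below_component in force)+
  thus ?thesis by auto
qed

lemma x_bounds: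
  obtains c C where "0 < c" "0 < C"
    "\<And>t a i. 0 \<le> t \<Longrightarrow> c \<le> x t a i" "\<And>t a i. 0 \<le> t \<Longrightarrow> x t a i \<le> C"
proof -
  obtain c where "0 < c" and c: "\<And>t a i. 0 \<le> t \<Longrightarrow> c \<le> x t a i" using x_bounded_below by blast
  have mass_pos: "0 < (\<Sum>g\<in>UNIV. \<Sum>j\<in>UNIV. x 0 g j)" using x0 by (intro sum_pos) auto
  show ?thesis
  proof (rule that[OF \<open>0 < c\<close> mass_pos c])
    fix t a i assume "0 \<le> (t::real)"
    hence "x t a i \<le> (\<Sum>j\<in>UNIV. x 0 a j)" by (rule x_le_mass)
    also have "\<dots> \<le> (\<Sum>g\<in>UNIV. \<Sum>j\<in>UNIV. x 0 g j)"
      by (rule member_le_sum) (auto intro: sum_nonneg less_imp_le x0)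
    finally show "x t a i \<le> (\<Sum>g\<in>UNIV. \<Sum>j\<in>UNIV. x 0 g j)" .
  qed
qed

lemma Lmat_offdiag_nonpos: "0 \<le> t \<Longrightarrow> j \<noteq> i \<Longrightarrow> Lmat q (x t) a i j \<le> 0"
  unfolding Lmat_def using q_nonneg x_nonneg x_pos by (simp add: divide_nonneg_pos)

lemma Lmat_diag_bounded: "\<exists>W. \<forall>t\<ge>0. \<forall>a i. Lmat q (x t) a i i \<le> W"
proof -
  obtain c C where "0 < c" and c: "\<And>t a i. 0 \<le> t \<Longrightarrow> c \<le> x t a i"
    and C: "\<And>t a i. 0 \<le> t \<Longrightarrow> x t a i \<le> C"
    using x_bounds by metis
  define S where "S k = (\<Sum>j\<in>UNIV - {snd k}. q (fst k) j (snd k)) * C / c" for k :: "'c \<times> 'n"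
  have "Lmat q (x t) a i i \<le> S (a, i)" if "0 \<le> t" for t a i
  proof -
    have "(\<Sum>j\<in>UNIV - {i}. q a j i * x t a j) \<le> (\<Sum>j\<in>UNIV - {i}. q a j i) * C"
      unfolding sum_distrib_right using that C by (intro sum_mono mult_left_mono q_nonneg) auto
    moreover have "0 \<le> (\<Sum>j\<in>UNIV - {i}. q a j i) * C"
      using that C[of t a i] x_nonneg[of t a i] by (intro mult_nonneg_nonneg sum_nonneg q_nonneg) auto
    ultimately have "Lmat q (x t) a i i \<le> (\<Sum>j\<in>UNIV - {i}. q a j i) * C / x t a i"
      unfolding Lmat_def using x_nonneg[OF that, of a i] by (simp add: divide_right_mono)
    also have "\<dots> \<le> S (a, i)"
      unfolding S_def fst_conv snd_conv using \<open>0 < c\<close> c[OF that] x_pos[OF that]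
      by (intro divide_left_mono \<open>0 \<le> (\<Sum>j\<in>UNIV - {i}. q a j i) * C\<close>) (auto intro: mult_pos_pos)
    finally show ?thesis .
  qed
  moreover have "S k \<le> Max (range S)" for k by simp
  ultimately show ?thesis by (meson order_trans)
qed

lemma Lmat_offdiag_bounded_below: "\<exists>r>0. \<forall>t\<ge>0. \<forall>a i j. j \<noteq> i \<longrightarrow> r * q a j i \<le> - Lmat q (x t) a i j"
proof -
  obtain c C where "0 < c" "0 < C" and c: "\<And>t a i. 0 \<le> t \<Longrightarrow> c \<le> x t a i"
    and C: "\<And>t a i. 0 \<le> t \<Longrightarrow> x t a i \<le> C"
    using x_bounds by blast
  have "c / C * q a j i \<le> - Lmat q (x t) a i j" if "0 \<le> t" "j \<noteq> i" for t a i j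
  proof -
    have "c / C \<le> x t a j / x t a i"
      using \<open>0 < c\<close> c[OF that(1)] C[OF that(1)] x_pos[OF that(1)] by (intro frac_le) (auto intro: less_imp_le)
    hence "c / C * q a j i \<le> x t a j / x t a i * q a j i"
      using q_nonneg[OF that(2)] by (rule mult_right_mono)
    thus ?thesis unfolding Lmat_def using that(2) by (simp add: ac_simps)
  qed
  thus ?thesis using \<open>0 < c\<close> \<open>0 < C\<close> by (intro exI[of _ "c / C"]) auto
qed

lemma frac_bounded_below: "\<exists>f>0. \<forall>t\<ge>0. \<forall>a i. f \<le> frac (x t) a i"
proof -
  obtain c C where "0 < c" "0 < C" and c: "\<And>t a i. 0 \<le> t \<Longrightarrow> c \<le> x t a i"
    and C: "\<And>t a i. 0 \<le> t \<Longrightarrow> x t a i \<le> C"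
    using x_bounds by blast
  have "c / (CARD('c) * C) \<le> frac (x t) a i" if "0 \<le> t" for t a i
  proof -
    have "(\<Sum>g\<in>UNIV. x t g i) \<le> CARD('c) * C"
      using sum_mono[of UNIV "\<lambda>g. x t g i" "\<lambda>_. C"] C[OF that] by simp
    thus ?thesis
      unfolding frac_def using \<open>0 < c\<close> c[OF that] x_pos[OF that] \<open>0 < C\<close>
      by (intro frac_le) (auto intro: sum_pos less_imp_le)
  qed
  thus ?thesis using \<open>0 < c\<close> \<open>0 < C\<close> by (intro exI[of _ "c / (CARD('c) * C)"]) auto
qed

section \<open>Infection dynamics\<close>

lemma p_continuous: "continuous_on {0..} (\<lambda>s. p s a i)"
  by (rule continuous_on_if_has_real_derivative_nonneg[OF p_deriv])

lemma p_deriv_at: "0 < t \<Longrightarrow> ((\<lambda>s. p s a i) has_real_derivative p_rhs q \<beta> \<delta> (x t) (p t) a i) (at t)"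
  by (rule has_real_derivative_at_if_pos[OF p_deriv]) simp_all

lemma p_nonneg:
  assumes "0 \<le> t"
  shows "0 \<le> p t a i"
proof -
  define B where "B = (\<Sum>l\<in>UNIV. \<beta> l)"
  have "0 \<le> p t (fst (a, i)) (snd (a, i))"
  proof (rule nonneg_invariant[where u = "\<lambda>t k. p t (fst k) (snd k)" and K = "2 * B"
        and u' = "\<lambda>t k. p_rhs q \<beta> \<delta> (x t) (p t) (fst k) (snd k)"])
    show "0 \<le> 2 * B" unfolding B_def using beta_pos by (simp add: sum_nonneg less_imp_le)
    fix t :: real and k :: "'c \<times> 'n"
    obtain b l where k: "k = (b, l)" by fastforce
    assume "0 < t" "-1 \<le> p t (fst k) (snd k)" "p t (fst k) (snd k) \<le> 0"
      and "\<And>k'. p t (fst k) (snd k) \<le> p t (fst k') (snd k')"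
    hence m: "-1 \<le> p t b l" "p t b l \<le> 0" and min: "\<And>g j. p t b l \<le> p t g j"
      unfolding k by (auto dest: spec[of _ "(g, j)" for g j])
    have "2 * B * p t b l \<le> 2 * \<beta> l * p t b l"
      using m member_le_sum[of l UNIV \<beta>] beta_pos by (simp add: B_def less_imp_le mult_right_mono_neg)
    also have "\<dots> \<le> \<beta> l * p t b l * (1 - p t b l)"
    proof -
      have "0 \<le> \<beta> l * (- p t b l) * (1 + p t b l)"
        using m beta_pos[of l] by (intro mult_nonneg_nonneg) auto
      thus ?thesis by (simp add: algebra_simps)
    qed
    also have "\<dots> \<le> \<beta> l * pbar (x t) (p t) l * (1 - p t b l)"
      using m beta_pos[of l] pbar_ge_lower_bound[of "x t" l "p t b l" "p t"] min x_pos \<open>0 < t\<close>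
      by (intro mult_right_mono mult_left_mono) auto
    also have "\<dots> \<le> p_rhs q \<beta> \<delta> (x t) (p t) b l"
    proof -
      have "0 \<le> - \<delta> l * p t b l" using m delta_nonneg[of l] by (simp add: mult_nonneg_nonpos)
      moreover have "(\<Sum>j\<in>UNIV - {l}. Lmat q (x t) b l j * (p t b j - p t b l)) \<le> 0"
        using Lmat_offdiag_nonpos min \<open>0 < t\<close> by (intro sum_nonpos mult_nonpos_nonneg) auto
      ultimately show ?thesis unfolding p_rhs_eq by simp
    qed
    finally show "2 * B * p t (fst k) (snd k) \<le> p_rhs q \<beta> \<delta> (x t) (p t) (fst k) (snd k)"
      unfolding k by simp
  qed (use assms p_deriv p0 in auto)
  thus ?thesis by simp
qed

lemma p_le_1:
  assumes "0 \<le> t"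
  shows "p t a i \<le> 1"
proof -
  have "0 \<le> 1 - p t (fst (a, i)) (snd (a, i))"
  proof (rule nonneg_invariant[where u = "\<lambda>t k. 1 - p t (fst k) (snd k)" and K = 0
        and u' = "\<lambda>t k. - p_rhs q \<beta> \<delta> (x t) (p t) (fst k) (snd k)"])
    fix t :: real and k :: "'c \<times> 'n"
    obtain b l where k: "k = (b, l)" by fastforce
    assume "0 < t" "-1 \<le> 1 - p t (fst k) (snd k)" "1 - p t (fst k) (snd k) \<le> 0"
      and "\<And>k'. 1 - p t (fst k) (snd k) \<le> 1 - p t (fst k') (snd k')"
    hence m: "1 \<le> p t b l" and max: "\<And>g j. p t g j \<le> p t b l"
      unfolding k by (auto dest: spec[of _ "(g, j)" for g j])
    have "0 \<le> \<delta> l * p t b l" using m delta_nonneg[of l] by simp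
    moreover have "\<beta> l * pbar (x t) (p t) l * (1 - p t b l) \<le> 0"
      using m beta_pos[of l] pbar_ge_lower_bound[of "x t" l 0 "p t"] x_pos p_nonneg \<open>0 < t\<close>
      by (intro mult_nonneg_nonpos) auto
    moreover have "0 \<le> (\<Sum>j\<in>UNIV - {l}. Lmat q (x t) b l j * (p t b j - p t b l))"
      using Lmat_offdiag_nonpos max \<open>0 < t\<close> by (intro sum_nonneg mult_nonpos_nonpos) auto
    ultimately show "0 * (1 - p t (fst k) (snd k)) \<le> - p_rhs q \<beta> \<delta> (x t) (p t) (fst k) (snd k)"
      unfolding k p_rhs_eq by simp
  qed (use assms p_deriv p0 in \<open>auto intro!: derivative_eq_intros\<close>)
  thus ?thesis by simp
qed

definition p_gain :: "real \<Rightarrow> 'c \<Rightarrow> 'n \<Rightarrow> real" where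
  "p_gain t a i = \<beta> i * pbar (x t) (p t) i * (1 - p t a i) - (\<Sum>j\<in>UNIV - {i}. Lmat q (x t) a i j * p t a j)"

lemma p_rhs_lower_bound: "\<exists>M\<ge>0. \<forall>t\<ge>0. \<forall>a i. p_gain t a i - M * p t a i \<le> p_rhs q \<beta> \<delta> (x t) (p t) a i"
proof -
  obtain W where W: "\<And>t a i. 0 \<le> t \<Longrightarrow> Lmat q (x t) a i i \<le> W" using Lmat_diag_bounded by blast
  define M where "M = Max (range \<delta>) + max W 0"
  have "\<delta> i \<le> Max (range \<delta>)" for i by simp
  hence "0 \<le> M" unfolding M_def using delta_nonneg by (meson add_nonneg_nonneg max.cobounded2 order_trans)
  moreover have "p_gain t a i - M * p t a i \<le> p_rhs q \<beta> \<delta> (x t) (p t) a i" if "0 \<le> t" for t a i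
  proof -
    have "\<delta> i + Lmat q (x t) a i i \<le> M"
      unfolding M_def using W[OF that, of a i] \<open>\<delta> i \<le> Max (range \<delta>)\<close> by linarith
    hence "(\<delta> i + Lmat q (x t) a i i) * p t a i \<le> M * p t a i"
      using p_nonneg[OF that] by (rule mult_right_mono)
    thus ?thesis unfolding p_rhs_def p_gain_def by (simp add: algebra_simps)
  qed
  ultimately show ?thesis by blast
qed

lemma infection_term_nonneg: "0 \<le> t \<Longrightarrow> 0 \<le> \<beta> i * pbar (x t) (p t) i * (1 - p t a i)"
  using beta_pos[of i] pbar_ge_lower_bound[of "x t" i 0 "p t"] x_pos p_nonneg p_le_1[of t a i]
  by (simp add: less_imp_le)

lemma inflow_term_nonneg:
  assumes "0 \<le> t"
  shows "0 \<le> - (\<Sum>j\<in>UNIV - {i}. Lmat q (x t) a i j * p t a j)"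
proof -
  have "(\<Sum>j\<in>UNIV - {i}. Lmat q (x t) a i j * p t a j) \<le> 0"
    using assms by (intro sum_nonpos mult_nonpos_nonneg Lmat_offdiag_nonpos p_nonneg) auto
  thus ?thesis by simp
qed

lemma p_decay: "\<exists>d>0. \<forall>t\<ge>0. \<forall>s. t \<le> s \<longrightarrow> s \<le> t + 1 \<longrightarrow> (\<forall>a i. d * p t a i \<le> p s a i)"
proof -
  obtain M where "0 \<le> M" and M: "\<And>t a i. 0 \<le> t \<Longrightarrow> p_gain t a i - M * p t a i \<le> p_rhs q \<beta> \<delta> (x t) (p t) a i"
    using p_rhs_lower_bound by blast
  have "exp (- M) * p t a i \<le> p s a i" if "0 \<le> t" "t \<le> s" "s \<le> t + 1" for t s a i
  proof -
    have "exp (- M * (s - t)) * (p t a i + 0 * (s - t)) \<le> p s a i"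
    proof (rule differential_inequality_lower_bound[where f' = "\<lambda>r. p_rhs q \<beta> \<delta> (x r) (p r) a i"])
      show "continuous_on {t..s} (\<lambda>r. p r a i)"
        using that by (auto intro: continuous_on_subset[OF p_continuous])
      fix r assume "t < r" "r < s"
      with that show "((\<lambda>r. p r a i) has_real_derivative p_rhs q \<beta> \<delta> (x r) (p r) a i) (at r)"
        by (intro p_deriv_at) simp
      show "0 - M * p r a i \<le> p_rhs q \<beta> \<delta> (x r) (p r) a i"
        using M[where t = r and a = a and i = i] infection_term_nonneg[where t = r and a = a and i = i]
          inflow_term_nonneg[where t = r and a = a and i = i] \<open>t < r\<close> that
        by (simp add: p_gain_def)
    qed (use that \<open>0 \<le> M\<close> in auto)
    moreover have "M * (s - t) \<le> M" using that \<open>0 \<le> M\<close> mult_left_mono[of "s - t" 1 M] by simp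
    hence "exp (- M) * p t a i \<le> exp (- M * (s - t)) * p t a i"
      using p_nonneg[OF that(1)] by (intro mult_right_mono) auto
    ultimately show ?thesis by simp
  qed
  thus ?thesis by (intro exI[of _ "exp (- M)"]) auto
qed

lemma p_vanishing_spreads_across_classes:
  assumes "((\<lambda>t. p t a i) \<longlongrightarrow> 0) at_top"
  shows "((\<lambda>t. p t g i) \<longlongrightarrow> 0) at_top"
proof -
  obtain M where "0 \<le> M" and M: "\<And>t a i. 0 \<le> t \<Longrightarrow> p_gain t a i - M * p t a i \<le> p_rhs q \<beta> \<delta> (x t) (p t) a i"
    using p_rhs_lower_bound by blast
  obtain d where "0 < d" and d: "\<And>t s a i. 0 \<le> t \<Longrightarrow> t \<le> s \<Longrightarrow> s \<le> t + 1 \<Longrightarrow> d * p t a i \<le> p s a i"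
    using p_decay by blast
  obtain f where "0 < f" and f: "\<And>t a i. 0 \<le> t \<Longrightarrow> f \<le> frac (x t) a i"
    using frac_bounded_below by blast
  obtain T where T: "\<And>t. T \<le> t \<Longrightarrow> p t a i < 1 / 2"
    using order_tendstoD(2)[OF assms, of "1 / 2"] by (auto simp: eventually_at_top_linorder)
  show ?thesis
  proof (rule forcing_term_tendsto_zero[where T = "max T 1" and K = M and d = d
        and y' = "\<lambda>t. p_rhs q \<beta> \<delta> (x t) (p t) a i" and c = "\<beta> i * f / 2"])
    fix t assume t: "max T 1 \<le> t"
    have "f * p t g i \<le> frac (x t) g i * p t g i"
      using f p_nonneg t by (intro mult_right_mono) auto
    also have "\<dots> \<le> pbar (x t) (p t) i"
      using t by (intro frac_mult_le_pbar x_nonneg p_nonneg) auto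
    finally have "f * p t g i \<le> pbar (x t) (p t) i" .
    moreover have "0 \<le> f * p t g i" using \<open>0 < f\<close> p_nonneg t by simp
    ultimately have "\<beta> i * (f * p t g i) * (1 / 2) \<le> \<beta> i * pbar (x t) (p t) i * (1 - p t a i)"
      using T[of t] t beta_pos[of i] by (intro mult_mono mult_left_mono) auto
    thus "\<beta> i * f / 2 * p t g i - M * \<bar>p t a i\<bar> \<le> p_rhs q \<beta> \<delta> (x t) (p t) a i"
      using M[where t = t and a = a and i = i] inflow_term_nonneg[where t = t and a = a and i = i]
        p_nonneg[of t a i] t by (simp add: p_gain_def)
  qed (use assms d p_nonneg p_deriv_at \<open>0 \<le> M\<close> \<open>0 < d\<close> \<open>0 < f\<close> beta_pos in auto)
qed

lemma p_vanishing_spreads_along_edge: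
  assumes "((\<lambda>t. p t a i) \<longlongrightarrow> 0) at_top" and "j \<noteq> i" "0 < q a j i"
  shows "((\<lambda>t. p t a j) \<longlongrightarrow> 0) at_top"
proof -
  obtain M where "0 \<le> M" and M: "\<And>t a i. 0 \<le> t \<Longrightarrow> p_gain t a i - M * p t a i \<le> p_rhs q \<beta> \<delta> (x t) (p t) a i"
    using p_rhs_lower_bound by blast
  obtain d where "0 < d" and d: "\<And>t s a i. 0 \<le> t \<Longrightarrow> t \<le> s \<Longrightarrow> s \<le> t + 1 \<Longrightarrow> d * p t a i \<le> p s a i"
    using p_decay by blast
  obtain r where "0 < r" and r: "\<And>t a i j. 0 \<le> t \<Longrightarrow> j \<noteq> i \<Longrightarrow> r * q a j i \<le> - Lmat q (x t) a i j"
    using Lmat_offdiag_bounded_below by blast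
  show ?thesis
  proof (rule forcing_term_tendsto_zero[where T = 1 and K = M and d = d
        and y' = "\<lambda>t. p_rhs q \<beta> \<delta> (x t) (p t) a i" and c = "r * q a j i"])
    fix t :: real assume "1 \<le> t"
    hence "0 \<le> t" by simp
    have "r * q a j i * p t a j \<le> - Lmat q (x t) a i j * p t a j"
      using r[OF \<open>0 \<le> t\<close> assms(2)] p_nonneg[OF \<open>0 \<le> t\<close>] by (rule mult_right_mono)
    also have "\<dots> \<le> (\<Sum>k\<in>UNIV - {i}. - Lmat q (x t) a i k * p t a k)"
      using assms(2) Lmat_offdiag_nonpos[OF \<open>0 \<le> t\<close>] p_nonneg[OF \<open>0 \<le> t\<close>]
      by (intro member_le_sum mult_nonneg_nonneg) auto
    finally show "r * q a j i * p t a j - M * \<bar>p t a i\<bar> \<le> p_rhs q \<beta> \<delta> (x t) (p t) a i"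
      using M[where t = t and a = a and i = i] infection_term_nonneg[where t = t and a = a and i = i]
        p_nonneg[of t a i] \<open>0 \<le> t\<close>
      by (simp add: p_gain_def sum_negf)
  qed (use assms d p_nonneg p_deriv_at \<open>0 \<le> M\<close> \<open>0 < d\<close> \<open>0 < r\<close> in auto)
qed

end

theorem lemma1:
  fixes q :: "'c::finite \<Rightarrow> 'n::finite \<Rightarrow> 'n \<Rightarrow> real"
    and \<beta> \<delta> :: "'n \<Rightarrow> real"
    and x p :: "real \<Rightarrow> 'c \<Rightarrow> 'n \<Rightarrow> real"
  assumes gen: "\<And>a. is_generator (q a)"
    and irr: "\<And>a. irreducible_generator (q a)"
    and beta_pos: "\<And>i. 0 < \<beta> i"
    and delta_nonneg: "\<And>i. 0 \<le> \<delta> i"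
    and x_deriv: "\<And>t a i. 0 \<le> t \<Longrightarrow>
        ((\<lambda>s. x s a i) has_real_derivative x_rhs q (x t) a i) (at t within {0..})"
    and p_deriv: "\<And>t a i. 0 \<le> t \<Longrightarrow>
        ((\<lambda>s. p s a i) has_real_derivative p_rhs q \<beta> \<delta> (x t) (p t) a i) (at t within {0..})"
    and x0: "\<And>a i. 0 < x 0 a i"
    and p0: "\<And>a i. 0 \<le> p 0 a i \<and> p 0 a i \<le> 1"
    and lim: "((\<lambda>t. p t a0 i0) \<longlongrightarrow> 0) at_top"
  shows "\<forall>a i. ((\<lambda>t. p t a i) \<longlongrightarrow> 0) at_top"
proof (intro allI)
  interpret sis_model q \<beta> \<delta> x p
    by unfold_locales (fact gen irr beta_pos delta_nonneg x_deriv p_deriv x0 p0)+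
  fix a i
  have "(i, i0) \<in> {(u, v). u \<noteq> v \<and> 0 < q a u v}\<^sup>*"
    using irr[of a] unfolding irreducible_generator_def by blast
  thus "((\<lambda>t. p t a i) \<longlongrightarrow> 0) at_top"
  proof (induction rule: converse_rtrancl_induct)
    case base
    show ?case using lim by (rule p_vanishing_spreads_across_classes)
  next
    case (step j k)
    thus ?case using p_vanishing_spreads_along_edge by blast
  qed
qed

end
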